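(* For $\nu\in[0,\infty)$ and $\mu\in\mathbb R$ let $$S_\nu(\mu):=\frac12\inf_{A\geq\Phi}\int_{\mathbb R}\bigl|A'(x)-\phi_{\mu,\nu}(x)\bigr|\,\mathrm dx ,$$ where the infimum is over cumulative distribution functions $A$ (with density $A'$) satisfying $A(x)\geq\Phi(x)$ for all $x$. Then: (i) $S_\nu$ is a cumulative distribution function for every $\nu\in[0,\infty)$. (ii) For $\nu\notin\{0,1,\infty\}$, $$S_\nu(\mu)=\Phi\!\left(\frac{\mu-\sqrt\nu\sqrt{\mu^2+(\nu-1)\ln\nu}}{1-\nu}\right)-\Phi\!\left(\frac{\sqrt\nu\,\mu-\sqrt{\mu^2+(\nu-1)\ln\nu}}{1-\nu}\right).$$ (iii) For $0<\nu<\infty$ the inverse cdf is $S_\nu^{-1}(\epsilon)=\min_{x\in(\epsilon,1)}\bigl[\sqrt\nu\,\Phi^{-1}(x)-\Phi^{-1}(x-\epsilon)\bigr]$. (iv) $S_0(\mu)=\lim_{\nu\to\infty}S_\nu(\sqrt\nu\,\mu)=\Phi(\mu)$. (v) $S_1(\mu)=\max\{2\Phi(\mu/2)-1,0\}$. (vi) $S_\nu(\mu)=S_{1/\nu}(\mu/\sqrt\nu)$, equivalently $S_\nu^{-1}(\epsilon)=\sqrt\nu\,S_{1/\nu}^{-1}(\epsilon)$.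
   Context: $\phi_{\mu,\nu}$ and $\Phi_{\mu,\nu}$ denote the density and cumulative distribution function of the normal distribution with mean $\mu$ and variance $\nu$; $\phi=\phi_{0,1}$ and $\Phi=\Phi_{0,1}$ are the standard normal density and cdf; $\ln$ is the natural logarithm. *)

theory Defs
  imports "HOL-Probability.Probability"
begin

(* Normal distribution N(mu, nu) with mean mu and VARIANCE nu, as a measure on the reals.
   For nu = 0 it is the point mass at mu (degenerate normal). *)
definition gauss :: "real \<Rightarrow> real \<Rightarrow> real measure" where
  "gauss mu nu = (if nu = 0 then return borel mu
                  else density lborel (\<lambda>x. ennreal (normal_density mu (sqrt nu) x)))"

definition Phi :: "real \<Rightarrow> real" where
  "Phi x = cdf (gauss 0 1) x"

definition Phi_inv :: "real \<Rightarrow> real" where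
  "Phi_inv p = Inf {x. p \<le> Phi x}"

(* total variation distance  sup_B |P B - Q B|  (= 1/2 int |p - q| when densities exist) *)
definition tv_dist :: "real measure \<Rightarrow> real measure \<Rightarrow> real" where
  "tv_dist P Q = (SUP B \<in> sets borel. \<bar>measure P B - measure Q B\<bar>)"

definition S :: "real \<Rightarrow> real \<Rightarrow> real" where
  "S nu mu = Inf {tv_dist A (gauss mu nu) | A. real_distribution A \<and> (\<forall>x. Phi x \<le> cdf A x)}"

definition S_inv :: "real \<Rightarrow> real \<Rightarrow> real" where
  "S_inv nu eps = Inf {mu. eps \<le> S nu mu}"

end

theory Submission
  imports Defs
begin

text \<open>
  Testing \<open>A\<close> on the half-lines \<open>(-\<infinity>, t]\<close> gives \<open>S\<^sub>\<nu>(\<mu>) \<ge> \<Phi>(t) - G(t)\<close> for every \<open>t\<close>,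
  where \<open>G\<close> is the cdf of \<open>N(\<mu>, \<nu>)\<close>, and this bound is attained. For \<open>\<nu> \<noteq> 1\<close> the densities
  of \<open>N(0, 1)\<close> and \<open>N(\<mu>, \<nu>)\<close> cross at the two roots \<open>x\<^sub>-, x\<^sub>+\<close> of a quadratic, and \<open>\<Phi> - G\<close>
  is maximal at \<open>x\<^sub>-\<close>. Between the roots \<open>\<Phi> - G\<close> changes sign, so the cdfs meet at some
  \<open>c\<close>; the distribution that follows \<open>N(0, 1)\<close> on one side of \<open>c\<close> and \<open>N(\<mu>, \<nu>)\<close> on the
  other dominates \<open>\<Phi>\<close>, and by Scheffe's argument its distance to \<open>N(\<mu>, \<nu>)\<close> is
  \<open>\<Phi>(x\<^sub>-) - G(x\<^sub>-)\<close>. This is the closed formula; continuity, monotonicity, the limits and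
  the symmetry \<open>\<nu> \<mapsto> 1/\<nu>\<close> are read off from it. Writing \<open>\<Phi>(t) - G(t) \<ge> \<epsilon>\<close> in quantile
  coordinates turns the generalized inverse of \<open>S\<^sub>\<nu>\<close> into a minimum over \<open>(\<epsilon>, 1)\<close>.
\<close>

lemma sets_gauss [simp, measurable_cong]: "sets (gauss m v) = sets borel"
  by (simp add: gauss_def)

lemma space_gauss [simp]: "space (gauss m v) = UNIV"
  using sets_eq_imp_space_eq[OF sets_gauss] by simp

lemma gauss_eq_density: "v > 0 \<Longrightarrow> gauss m v = density lborel (\<lambda>x. ennreal (normal_density m (sqrt v) x))"
  by (simp add: gauss_def)

lemma real_distribution_gauss: "v \<ge> 0 \<Longrightarrow> real_distribution (gauss m v)"
  using prob_space_normal_density[where \<mu>=m and \<sigma>="sqrt v"]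
  by (cases "v = 0") (auto simp: gauss_def real_distribution_def real_distribution_axioms_def prob_space_return)

lemma finite_borel_measure_gauss: "v \<ge> 0 \<Longrightarrow> finite_borel_measure (gauss m v)"
  by (rule real_distribution.finite_borel_measure_M[OF real_distribution_gauss])

lemma real_distribution_std_normal: "real_distribution (gauss 0 1)"
  by (rule real_distribution_gauss) simp

lemma cdf_std_normal [simp]: "cdf (gauss 0 1) = Phi"
  by (simp add: Phi_def[abs_def])

lemma emeasure_gauss: "v \<ge> 0 \<Longrightarrow> emeasure (gauss m v) B = measure (gauss m v) B"
  using finite_measure.emeasure_eq_measure real_distribution_gauss
  by (auto simp: real_distribution_def prob_space_def)

lemma measure_gauss_singleton: "v > 0 \<Longrightarrow> measure (gauss m v) {a} = 0"
proof -
  assume "v > 0"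
  have "AE x in lborel. x \<in> {a} \<longrightarrow> normal_density m (sqrt v) x = 0"
    by (rule AE_I'[of "{a}"]) auto
  then have "{a} \<in> null_sets (gauss m v)"
    using \<open>v > 0\<close> by (simp add: gauss_eq_density null_sets_density_iff)
  then show ?thesis by (simp add: measure_def null_sets_def)
qed

lemma isCont_cdf_gauss: "v > 0 \<Longrightarrow> isCont (cdf (gauss m v)) x"
  using finite_borel_measure.isCont_cdf[OF finite_borel_measure_gauss] measure_gauss_singleton by simp

lemma distr_gauss_affine:
  assumes "v > 0" "b \<noteq> 0"
  shows "distr (gauss m v) lborel (\<lambda>x. a + b * x) = gauss (a + b * m) (b\<^sup>2 * v)"
proof -
  interpret prob_space "gauss m v"
    using real_distribution_gauss assms by (simp add: real_distribution_def)
  have "distributed (gauss m v) lborel (\<lambda>x. x) (\<lambda>x. ennreal (normal_density m (sqrt v) x))"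
    using assms by (simp add: distributed_def distr_id2 gauss_eq_density)
  then have "distributed (gauss m v) lborel (\<lambda>x. a + b * x)
      (\<lambda>x. ennreal (normal_density (a + b * m) (\<bar>b\<bar> * sqrt v) x))"
    by (rule normal_density_affine) (use assms in auto)
  moreover have "sqrt (b\<^sup>2 * v) = \<bar>b\<bar> * sqrt v"
    by (simp add: real_sqrt_mult)
  ultimately show ?thesis
    using assms by (simp add: distributed_def gauss_eq_density)
qed

lemma cdf_gauss:
  assumes "v > 0"
  shows "cdf (gauss m v) t = Phi ((t - m) / sqrt v)"
proof -
  have "gauss m v = distr (gauss 0 1) lborel (\<lambda>x. m + sqrt v * x)"
    using distr_gauss_affine[of 1 "sqrt v" 0 m] assms by simp
  moreover have "(\<lambda>x. m + sqrt v * x) -` {..t} = {..(t - m) / sqrt v}"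
    using assms by (auto simp: field_simps)
  ultimately show ?thesis
    by (simp add: cdf_def measure_distr Phi_def)
qed

lemma Phi_nonneg: "0 \<le> Phi x"
  and Phi_le_1: "Phi x \<le> 1"
  and Phi_mono: "x \<le> y \<Longrightarrow> Phi x \<le> Phi y"
  using finite_borel_measure.cdf_nonneg[OF finite_borel_measure_gauss[where v=1 and m=0]]
    real_distribution.cdf_bounded_prob[OF real_distribution_std_normal]
    finite_borel_measure.cdf_nondecreasing[OF finite_borel_measure_gauss[where v=1 and m=0]]
  by auto

lemma Phi_at_bot: "(Phi \<longlongrightarrow> 0) at_bot"
  and Phi_at_top: "(Phi \<longlongrightarrow> 1) at_top"
  using finite_borel_measure.cdf_lim_at_bot[OF finite_borel_measure_gauss[where v=1 and m=0]]
    real_distribution.cdf_lim_at_top_prob[OF real_distribution_std_normal]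
  by auto

lemma isCont_Phi [continuous_intros]: "isCont Phi x"
  using isCont_cdf_gauss[where v=1 and m=0] by simp

lemma isCont_Phi_comp [continuous_intros]: "isCont f x \<Longrightarrow> isCont (\<lambda>x. Phi (f x)) x"
  using continuous_at_compose[of x f Phi] isCont_Phi by (simp add: o_def)

lemma measure_gauss_atMost: "v \<ge> 0 \<Longrightarrow> measure (gauss m v) {..t} = cdf (gauss m v) t"
  by (simp add: cdf_def)

lemma measure_gauss_greaterThan: "v \<ge> 0 \<Longrightarrow> measure (gauss m v) {t<..} = 1 - cdf (gauss m v) t"
  using prob_space.prob_compl[of "gauss m v" "{..t}"] real_distribution_gauss
  by (auto simp: real_distribution_def cdf_def Compl_eq_Diff_UNIV[symmetric])

lemma measure_gauss_lessThan:
  assumes "v > 0"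
  shows "measure (gauss m v) {..<t} = cdf (gauss m v) t"
proof -
  interpret finite_borel_measure "gauss m v"
    using finite_borel_measure_gauss assms by simp
  have "{..<t} = {..t} - {t}" by auto
  then show ?thesis
    using finite_measure_Diff[of "{..t}" "{t}"] measure_gauss_singleton[OF assms] by (simp add: cdf_def)
qed

lemma measure_gauss_greaterThanAtMost:
  "v \<ge> 0 \<Longrightarrow> a \<le> b \<Longrightarrow> measure (gauss m v) {a<..b} = cdf (gauss m v) b - cdf (gauss m v) a"
  using finite_borel_measure.cdf_diff_eq[OF finite_borel_measure_gauss, of v a b m]
  by (cases "a = b") simp_all

lemma continuous_on_cdf_gauss_minus_Phi: "v > 0 \<Longrightarrow> continuous_on X (\<lambda>t. cdf (gauss m v) t - Phi t)"
  by (intro continuous_at_imp_continuous_on ballI isCont_diff isCont_cdf_gauss isCont_Phi)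

lemma Phi_minus: "Phi (- x) = 1 - Phi x"
proof -
  have "Phi (- x) = measure (distr (gauss 0 1) lborel (\<lambda>y. 0 + (-1) * y)) {..-x}"
    using distr_gauss_affine[of 1 "-1" 0 0] by (simp add: Phi_def cdf_def)
  also have "\<dots> = 1 - measure (gauss 0 1) {..<x}"
    using prob_space.prob_compl[of "gauss 0 1" "{..<x}"] real_distribution_std_normal
    by (simp add: measure_distr real_distribution_def Compl_eq_Diff_UNIV[symmetric] vimage_def
        atLeast_def[symmetric] Compl_lessThan)
  finally show ?thesis
    using measure_gauss_lessThan[of 1 0 x] by simp
qed

lemma Phi_strict_mono:
  assumes "x < y"
  shows "Phi x < Phi y"
proof -
  have "measure (gauss 0 1) {x<..y} \<noteq> 0"
  proof
    assume "measure (gauss 0 1) {x<..y} = 0"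
    then have "{x<..y} \<in> null_sets (gauss 0 1)"
      by (simp add: null_sets_def emeasure_gauss)
    then have "AE z in lborel. z \<in> {x<..y} \<longrightarrow> normal_density 0 1 z = 0"
      by (simp add: gauss_eq_density null_sets_density_iff)
    then have "AE z in lborel. z \<notin> {x<..y}"
      using normal_density_pos[where \<mu>=0 and \<sigma>=1] by (auto elim!: AE_mp intro!: AE_I2 simp: less_imp_neq[symmetric])
    then have "{x<..y} \<in> null_sets lborel"
      by (simp add: AE_iff_null_sets)
    then show False
      using assms by (simp add: null_sets_def)
  qed
  moreover have "0 \<le> measure (gauss 0 1) {x<..y}" by simp
  ultimately show ?thesis
    using measure_gauss_greaterThanAtMost[of 1 x y 0] assms by simp
qed

lemma Phi_less_iff [simp]: "Phi x < Phi y \<longleftrightarrow> x < y"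
  by (metis Phi_mono Phi_strict_mono not_le)

lemma Phi_le_iff [simp]: "Phi x \<le> Phi y \<longleftrightarrow> x \<le> y"
  by (meson Phi_less_iff not_le)

lemma Phi_pos: "0 < Phi x"
  using Phi_strict_mono[of "x - 1" x] Phi_nonneg[of "x - 1"] by linarith

lemma Phi_less_1: "Phi x < 1"
  using Phi_strict_mono[of x "x + 1"] Phi_le_1[of "x + 1"] by linarith

lemma Phi_surj:
  assumes "0 < p" "p < 1"
  obtains t where "Phi t = p"
proof -
  obtain a where a: "Phi a < p"
    using order_tendstoD(2)[OF Phi_at_bot assms(1)] by (auto simp: eventually_at_bot_linorder)
  obtain b where b: "p < Phi b"
    using order_tendstoD(1)[OF Phi_at_top assms(2)] by (auto simp: eventually_at_top_linorder)
  have "a \<le> b"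
    using a b by (metis Phi_less_iff less_trans order.strict_implies_order)
  then show ?thesis
    using IVT'[of Phi a p b] a b that by (auto intro: continuous_at_imp_continuous_on isCont_Phi)
qed

lemma Phi_inv_Phi [simp]: "Phi_inv (Phi t) = t"
proof -
  have "{x. Phi t \<le> Phi x} = {t..}" by auto
  then show ?thesis by (simp add: Phi_inv_def)
qed

lemma Phi_Phi_inv: "0 < p \<Longrightarrow> p < 1 \<Longrightarrow> Phi (Phi_inv p) = p"
  by (metis Phi_inv_Phi Phi_surj)

lemma le_Phi_inv_iff: "0 < p \<Longrightarrow> p < 1 \<Longrightarrow> t \<le> Phi_inv p \<longleftrightarrow> Phi t \<le> p"
  by (metis Phi_Phi_inv Phi_le_iff)

lemma Phi_inv_one_minus: "0 < p \<Longrightarrow> p < 1 \<Longrightarrow> Phi_inv (1 - p) = - Phi_inv p"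
  by (metis Phi_Phi_inv Phi_inv_Phi Phi_minus)

section \<open>Total variation distance\<close>

lemma (in finite_measure) measure_Int_Diff_split:
  "A \<in> sets M \<Longrightarrow> E \<in> sets M \<Longrightarrow> measure M A = measure M (A \<inter> E) + measure M (A - E)"
proof -
  assume "A \<in> sets M" "E \<in> sets M"
  then have "measure M ((A \<inter> E) \<union> (A - E)) = measure M (A \<inter> E) + measure M (A - E)"
    by (intro finite_measure_Union) auto
  moreover have "(A \<inter> E) \<union> (A - E) = A" by auto
  ultimately show ?thesis by simp
qed

lemma abs_measure_diff_le_1:
  "prob_space P \<Longrightarrow> prob_space Q \<Longrightarrow> \<bar>measure P B - measure Q B\<bar> \<le> 1"
  using prob_space.prob_le_1[of P B] prob_space.prob_le_1[of Q B] measure_nonneg[of P B]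
    measure_nonneg[of Q B]
  unfolding abs_le_iff by (intro conjI; linarith)

lemma tv_dist_ge:
  assumes "real_distribution P" "real_distribution Q" "B \<in> sets borel"
  shows "\<bar>measure P B - measure Q B\<bar> \<le> tv_dist P Q"
proof -
  have "\<bar>measure P B - measure Q B\<bar> \<le> 1" for B
    using assms(1,2) by (intro abs_measure_diff_le_1) (simp_all add: real_distribution_def)
  then show ?thesis
    unfolding tv_dist_def using assms(3) by (auto intro!: cSUP_upper bdd_aboveI2)
qed

lemma tv_dist_le:
  "(\<And>B. B \<in> sets borel \<Longrightarrow> \<bar>measure P B - measure Q B\<bar> \<le> s) \<Longrightarrow> tv_dist P Q \<le> s"
  unfolding tv_dist_def by (rule cSUP_least) auto

lemma tv_dist_nonneg: "real_distribution P \<Longrightarrow> real_distribution Q \<Longrightarrow> 0 \<le> tv_dist P Q"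
  using tv_dist_ge[of P Q "{}"] by simp

lemma tv_dist_le_1: "real_distribution P \<Longrightarrow> real_distribution Q \<Longrightarrow> tv_dist P Q \<le> 1"
  by (intro tv_dist_le abs_measure_diff_le_1) (simp_all add: real_distribution_def)

lemma tv_dist_le_split:
  assumes P: "real_distribution P" and Q: "real_distribution Q" and E: "E \<in> sets borel"
    and inside: "\<And>B. B \<in> sets borel \<Longrightarrow> B \<subseteq> E \<Longrightarrow> measure Q B \<le> measure P B"
    and outside: "\<And>B. B \<in> sets borel \<Longrightarrow> B \<inter> E = {} \<Longrightarrow> measure P B \<le> measure Q B"
  shows "tv_dist P Q \<le> measure P E - measure Q E"
proof (rule tv_dist_le)
  fix B :: "real set" assume B: "B \<in> sets borel"
  interpret p: real_distribution P by (rule P)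
  interpret q: real_distribution Q by (rule Q)
  have sets: "B \<inter> E \<in> sets borel" "B - E \<in> sets borel" "E - B \<in> sets borel" "- E - B \<in> sets borel"
    using B E by auto
  have disj: "(B - E) \<inter> E = {}" "(- E - B) \<inter> E = {}" and sub: "E - B \<subseteq> E" "B \<inter> E \<subseteq> E"
    by auto
  have "measure P B - measure Q B \<le> measure P (B \<inter> E) - measure Q (B \<inter> E)"
    using p.measure_Int_Diff_split[of B E] q.measure_Int_Diff_split[of B E] B E
      outside[OF sets(2) disj(1)] by simp
  also have "\<dots> \<le> measure P E - measure Q E"
    using p.measure_Int_Diff_split[of E B] q.measure_Int_Diff_split[of E B] B E
      inside[OF sets(3) sub(1)] by (simp add: Int_commute)
  finally have up: "measure P B - measure Q B \<le> measure P E - measure Q E" .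
  have "measure Q B - measure P B \<le> measure Q (B - E) - measure P (B - E)"
    using p.measure_Int_Diff_split[of B E] q.measure_Int_Diff_split[of B E] B E
      inside[OF sets(1) sub(2)] by simp
  also have "\<dots> \<le> measure Q (- E) - measure P (- E)"
    using p.measure_Int_Diff_split[of "- E" B] q.measure_Int_Diff_split[of "- E" B] B E
      outside[OF sets(4) disj(2)] by (simp add: Diff_eq Int_commute)
  also have "\<dots> = measure P E - measure Q E"
    using p.prob_compl[of E] q.prob_compl[of E] E by (simp add: Compl_eq_Diff_UNIV)
  finally show "\<bar>measure P B - measure Q B\<bar> \<le> measure P E - measure Q E"
    using up by linarith
qed

lemma S_le_tv_dist:
  assumes "v \<ge> 0" "real_distribution A" "\<And>x. Phi x \<le> cdf A x"
  shows "S v m \<le> tv_dist A (gauss m v)"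
  unfolding S_def using assms tv_dist_nonneg[OF _ real_distribution_gauss]
  by (intro cInf_lower bdd_belowI[of _ 0]) auto

lemma le_S:
  assumes "\<And>A. real_distribution A \<Longrightarrow> \<forall>x. Phi x \<le> cdf A x \<Longrightarrow> c \<le> tv_dist A (gauss m v)"
  shows "c \<le> S v m"
  unfolding S_def using assms real_distribution_std_normal
  by (intro cInf_greatest) force+

lemma S_nonneg: "v \<ge> 0 \<Longrightarrow> 0 \<le> S v m"
  by (rule le_S) (use tv_dist_nonneg real_distribution_gauss in auto)

lemma S_le_1: "v \<ge> 0 \<Longrightarrow> S v m \<le> 1"
  using S_le_tv_dist[OF _ real_distribution_std_normal]
    tv_dist_le_1[OF real_distribution_std_normal real_distribution_gauss]
  by (metis cdf_std_normal order.refl order.trans)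

lemma Phi_minus_cdf_le_S:
  assumes "v \<ge> 0"
  shows "Phi t - cdf (gauss m v) t \<le> S v m"
proof (rule le_S)
  fix A assume A: "real_distribution A" "\<forall>x. Phi x \<le> cdf A x"
  have "\<bar>measure A {..t} - measure (gauss m v) {..t}\<bar> \<le> tv_dist A (gauss m v)"
    using tv_dist_ge[OF A(1) real_distribution_gauss[OF assms]] by simp
  then show "Phi t - cdf (gauss m v) t \<le> tv_dist A (gauss m v)"
    using A(2)[rule_format, of t] by (simp add: cdf_def)
qed

lemma Phi_gap_le_S: "v > 0 \<Longrightarrow> Phi t - Phi ((t - m) / sqrt v) \<le> S v m"
  using Phi_minus_cdf_le_S[of v t m] cdf_gauss[of v m t] by simp

lemma S_eq_of_witness:
  assumes "v \<ge> 0" and A: "real_distribution A" "\<And>t. Phi t \<le> cdf A t" "cdf A x = Phi x"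
    and "\<And>B. B \<in> sets borel \<Longrightarrow> B \<subseteq> {..x} \<Longrightarrow> measure (gauss m v) B \<le> measure A B"
    and "\<And>B. B \<in> sets borel \<Longrightarrow> B \<inter> {..x} = {} \<Longrightarrow> measure A B \<le> measure (gauss m v) B"
  shows "S v m = Phi x - cdf (gauss m v) x"
proof (rule antisym)
  have "tv_dist A (gauss m v) \<le> measure A {..x} - measure (gauss m v) {..x}"
    by (rule tv_dist_le_split[OF A(1) real_distribution_gauss]) (use assms in auto)
  then show "S v m \<le> Phi x - cdf (gauss m v) x"
    using S_le_tv_dist[OF assms(1) A(1,2), of m] A(3) unfolding cdf_def by linarith
qed (rule Phi_minus_cdf_le_S[OF assms(1)])

section \<open>Comparing the densities of \<open>N(0,1)\<close> and \<open>N(m,v)\<close>\<close>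

definition log_density_ratio :: "real \<Rightarrow> real \<Rightarrow> real \<Rightarrow> real" where
  "log_density_ratio v m t = ((t - m)\<^sup>2 + v * ln v - v * t\<^sup>2) / (2 * v)"

lemma normal_density_eq_std:
  assumes "v > 0"
  shows "normal_density m (sqrt v) t = exp (- log_density_ratio v m t) * normal_density 0 1 t"
proof -
  have "- log_density_ratio v m t + - t\<^sup>2 / 2 = - (t - m)\<^sup>2 / (2 * v) - ln v / 2"
    using assms by (simp add: log_density_ratio_def field_simps)
  moreover have "exp (ln v / 2) = sqrt v"
    using assms by (simp add: powr_def powr_half_sqrt[symmetric] mult.commute)
  ultimately have "exp (- log_density_ratio v m t) * exp (- t\<^sup>2 / 2) = exp (- (t - m)\<^sup>2 / (2 * v)) / sqrt v"
    by (metis exp_add exp_diff)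
  then show ?thesis
    using assms by (simp add: normal_density_def real_sqrt_mult field_simps)
qed

lemma measure_gauss_mono_density:
  assumes "u > 0" "w > 0" "B \<in> sets borel"
    and "\<And>x. x \<in> B \<Longrightarrow> normal_density a (sqrt u) x \<le> normal_density b (sqrt w) x"
  shows "measure (gauss a u) B \<le> measure (gauss b w) B"
proof -
  have "emeasure (gauss a u) B = (\<integral>\<^sup>+x. ennreal (normal_density a (sqrt u) x) * indicator B x \<partial>lborel)"
    using assms by (simp add: gauss_eq_density emeasure_density)
  also have "\<dots> \<le> (\<integral>\<^sup>+x. ennreal (normal_density b (sqrt w) x) * indicator B x \<partial>lborel)"
    by (intro nn_integral_mono) (auto split: split_indicator intro!: ennreal_leI assms(4))
  also have "\<dots> = emeasure (gauss b w) B"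
    using assms by (simp add: gauss_eq_density emeasure_density)
  finally show ?thesis
    using assms by (simp add: emeasure_gauss)
qed

lemma measure_gauss_le_std_normal:
  assumes "v > 0" "B \<in> sets borel" "\<And>t. t \<in> B \<Longrightarrow> 0 \<le> log_density_ratio v m t"
  shows "measure (gauss m v) B \<le> measure (gauss 0 1) B"
  using assms normal_density_eq_std[OF assms(1)]
  by (intro measure_gauss_mono_density[where u=v and w=1, simplified]) (auto intro: mult_left_le_one_le)

lemma measure_std_normal_le_gauss:
  assumes "v > 0" "B \<in> sets borel" "\<And>t. t \<in> B \<Longrightarrow> log_density_ratio v m t \<le> 0"
  shows "measure (gauss 0 1) B \<le> measure (gauss m v) B"
proof -
  have "normal_density 0 1 t \<le> normal_density m (sqrt v) t" if "t \<in> B" for t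
  proof -
    have "1 \<le> exp (- log_density_ratio v m t)"
      using assms(3)[OF that] by simp
    then show ?thesis
      using normal_density_eq_std[OF assms(1), of m t] mult_right_mono[of 1 _ "normal_density 0 1 t"]
      by simp
  qed
  then show ?thesis
    using measure_gauss_mono_density[where u=1 and w=v and a=0 and b=m] assms by simp
qed

text \<open>For \<open>v \<noteq> 1\<close> the densities of \<open>N(0,1)\<close> and \<open>N(m,v)\<close> cross exactly at
  \<open>crossing_minus v m\<close> and \<open>crossing_plus v m\<close>.\<close>

definition crossing_disc :: "real \<Rightarrow> real \<Rightarrow> real" where
  "crossing_disc v m = m\<^sup>2 + (v - 1) * ln v"

definition crossing_minus :: "real \<Rightarrow> real \<Rightarrow> real" where
  "crossing_minus v m = (m - sqrt v * sqrt (crossing_disc v m)) / (1 - v)"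

definition crossing_plus :: "real \<Rightarrow> real \<Rightarrow> real" where
  "crossing_plus v m = (m + sqrt v * sqrt (crossing_disc v m)) / (1 - v)"

lemma crossing_disc_nonneg: "v > 0 \<Longrightarrow> 0 \<le> crossing_disc v m"
  unfolding crossing_disc_def
  by (cases "v \<ge> 1") (auto intro!: add_nonneg_nonneg mult_nonneg_nonneg mult_nonpos_nonpos)

lemma crossing_minus_le_plus: "0 < v \<Longrightarrow> v < 1 \<Longrightarrow> crossing_minus v m \<le> crossing_plus v m"
  unfolding crossing_minus_def crossing_plus_def
  using crossing_disc_nonneg[of v m] by (intro divide_right_mono) auto

lemma crossing_plus_le_minus: "1 < v \<Longrightarrow> crossing_plus v m \<le> crossing_minus v m"
  unfolding crossing_minus_def crossing_plus_def
  using crossing_disc_nonneg[of v m] by (intro divide_right_mono_neg) auto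

lemma log_density_ratio_factor:
  assumes "v > 0" "v \<noteq> 1"
  shows "log_density_ratio v m t
    = (1 - v) / (2 * v) * ((t - crossing_minus v m) * (t - crossing_plus v m))"
proof -
  define r where "r = sqrt v * sqrt (crossing_disc v m)"
  have r2: "r\<^sup>2 = v * (m\<^sup>2 + (v - 1) * ln v)"
    using assms(1) crossing_disc_nonneg[OF assms(1)]
    by (simp add: r_def power_mult_distrib crossing_disc_def)
  have ne: "1 - v \<noteq> 0" using assms by simp
  have "(t - crossing_minus v m) * (t - crossing_plus v m) = (((1 - v) * t - m)\<^sup>2 - r\<^sup>2) / (1 - v)\<^sup>2"
    using ne by (simp add: crossing_minus_def crossing_plus_def r_def[symmetric] field_simps power2_eq_square)
  also have "((1 - v) * t - m)\<^sup>2 - r\<^sup>2 = (1 - v) * ((t - m)\<^sup>2 + v * ln v - v * t\<^sup>2)"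
    unfolding r2 by (simp add: power2_eq_square algebra_simps)
  also have "(1 - v) * ((t - m)\<^sup>2 + v * ln v - v * t\<^sup>2) / (1 - v)\<^sup>2
      = ((t - m)\<^sup>2 + v * ln v - v * t\<^sup>2) / (1 - v)"
    using ne by (simp add: power2_eq_square)
  finally show ?thesis
    using assms(1) ne by (simp add: log_density_ratio_def)
qed

lemma log_density_ratio_sign_lt1:
  assumes "0 < v" "v < 1"
  shows "t \<le> crossing_minus v m \<or> crossing_plus v m \<le> t \<Longrightarrow> 0 \<le> log_density_ratio v m t"
    and "crossing_minus v m \<le> t \<Longrightarrow> t \<le> crossing_plus v m \<Longrightarrow> log_density_ratio v m t \<le> 0"
proof -
  have L: "log_density_ratio v m t
      = (1 - v) / (2 * v) * ((t - crossing_minus v m) * (t - crossing_plus v m))"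
    using assms by (simp add: log_density_ratio_factor)
  have pos: "0 \<le> (1 - v) / (2 * v)" using assms by simp
  have ord: "crossing_minus v m \<le> crossing_plus v m" by (rule crossing_minus_le_plus[OF assms])
  show "0 \<le> log_density_ratio v m t" if "t \<le> crossing_minus v m \<or> crossing_plus v m \<le> t"
    unfolding L using that ord by (intro mult_nonneg_nonneg[OF pos]) (auto intro: mult_nonpos_nonpos)
  show "log_density_ratio v m t \<le> 0" if "crossing_minus v m \<le> t" "t \<le> crossing_plus v m"
    unfolding L using that by (intro mult_nonneg_nonpos[OF pos]) (auto intro: mult_nonneg_nonpos)
qed

lemma log_density_ratio_sign_gt1:
  assumes "1 < v"
  shows "crossing_plus v m \<le> t \<Longrightarrow> t \<le> crossing_minus v m \<Longrightarrow> 0 \<le> log_density_ratio v m t"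
    and "t \<le> crossing_plus v m \<or> crossing_minus v m \<le> t \<Longrightarrow> log_density_ratio v m t \<le> 0"
proof -
  have L: "log_density_ratio v m t
      = (1 - v) / (2 * v) * ((t - crossing_minus v m) * (t - crossing_plus v m))"
    using assms by (simp add: log_density_ratio_factor)
  have neg: "(1 - v) / (2 * v) \<le> 0" using assms by (simp add: divide_nonpos_pos)
  have ord: "crossing_plus v m \<le> crossing_minus v m" by (rule crossing_plus_le_minus[OF assms])
  show "0 \<le> log_density_ratio v m t" if "crossing_plus v m \<le> t" "t \<le> crossing_minus v m"
    unfolding L using that by (intro mult_nonpos_nonpos[OF neg]) (auto intro: mult_nonpos_nonneg)
  show "log_density_ratio v m t \<le> 0" if "t \<le> crossing_plus v m \<or> crossing_minus v m \<le> t"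
    unfolding L using that ord
    by (intro mult_nonpos_nonneg[OF neg]) (auto intro: mult_nonpos_nonpos mult_nonneg_nonneg)
qed

section \<open>The closed formula\<close>

definition gauss_splice :: "real \<Rightarrow> real \<Rightarrow> real \<Rightarrow> real \<Rightarrow> real \<Rightarrow> real measure" where
  "gauss_splice c a u b w = density lborel (\<lambda>x. ennreal
     (if x \<le> c then normal_density a (sqrt u) x else normal_density b (sqrt w) x))"

lemma sets_gauss_splice [simp, measurable_cong]: "sets (gauss_splice c a u b w) = sets borel"
  by (simp add: gauss_splice_def)

lemma space_gauss_splice [simp]: "space (gauss_splice c a u b w) = UNIV"
  using sets_eq_imp_space_eq[OF sets_gauss_splice] by simp

lemma emeasure_gauss_splice:
  assumes "u > 0" "w > 0" "B \<in> sets borel"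
  shows "emeasure (gauss_splice c a u b w) B
    = ennreal (measure (gauss a u) (B \<inter> {..c}) + measure (gauss b w) (B \<inter> {c<..}))"
proof -
  have "emeasure (gauss_splice c a u b w) B
      = (\<integral>\<^sup>+x. ennreal (normal_density a (sqrt u) x) * indicator (B \<inter> {..c}) x
          + ennreal (normal_density b (sqrt w) x) * indicator (B \<inter> {c<..}) x \<partial>lborel)"
    using assms(3) unfolding gauss_splice_def
    by (auto simp: emeasure_density intro!: nn_integral_cong split: split_indicator)
  also have "\<dots> = emeasure (gauss a u) (B \<inter> {..c}) + emeasure (gauss b w) (B \<inter> {c<..})"
    using assms by (simp add: nn_integral_add gauss_eq_density emeasure_density)
  finally show ?thesis
    using assms by (simp add: emeasure_gauss ennreal_plus)
qed

lemma measure_gauss_splice: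
  assumes "u > 0" "w > 0" "B \<in> sets borel"
  shows "measure (gauss_splice c a u b w) B
    = measure (gauss a u) (B \<inter> {..c}) + measure (gauss b w) (B \<inter> {c<..})"
  using emeasure_gauss_splice[OF assms]
  by (simp add: measure_def[of "gauss_splice c a u b w"] ennreal_plus[symmetric] del: ennreal_plus)

lemma real_distribution_gauss_splice:
  assumes "u > 0" "w > 0" "cdf (gauss a u) c = cdf (gauss b w) c"
  shows "real_distribution (gauss_splice c a u b w)"
proof -
  have "emeasure (gauss_splice c a u b w) UNIV = 1"
    using assms measure_gauss_greaterThan[of w b c] by (simp add: emeasure_gauss_splice cdf_def)
  then have "prob_space (gauss_splice c a u b w)"
    by (intro prob_spaceI) simp
  then show ?thesis
    by (simp add: real_distribution_def real_distribution_axioms_def)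
qed

lemma cdf_gauss_splice:
  assumes "u > 0" "w > 0" "cdf (gauss a u) c = cdf (gauss b w) c"
  shows "cdf (gauss_splice c a u b w) t = (if t \<le> c then cdf (gauss a u) t else cdf (gauss b w) t)"
proof -
  have "c < t \<Longrightarrow> {..t} \<inter> {c<..} = {c<..t}" "t \<le> c \<Longrightarrow> {..t} \<inter> {c<..} = {}" by auto
  then show ?thesis
    using assms measure_gauss_greaterThanAtMost[of w c t b]
    by (auto simp: cdf_def measure_gauss_splice Int_absorb2 Int_absorb1)
qed

lemma measure_gauss_split_at:
  "v \<ge> 0 \<Longrightarrow> B \<in> sets borel \<Longrightarrow>
    measure (gauss m v) B = measure (gauss m v) (B \<inter> {..c}) + measure (gauss m v) (B \<inter> {c<..})"
  using finite_measure.measure_Int_Diff_split[of "gauss m v" B "{..c}"] real_distribution_gauss[of v m]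
  by (auto simp: real_distribution_def prob_space_def Diff_eq Compl_atMost)

lemma measure_gauss_le_std_normal_lt1:
  assumes "0 < v" "v < 1" "B \<in> sets borel"
    and "B \<subseteq> {..crossing_minus v m} \<union> {crossing_plus v m..}"
  shows "measure (gauss m v) B \<le> measure (gauss 0 1) B"
  using assms log_density_ratio_sign_lt1(1)[OF assms(1,2)] by (intro measure_gauss_le_std_normal) auto

lemma measure_std_normal_le_gauss_lt1:
  assumes "0 < v" "v < 1" "B \<in> sets borel" "B \<subseteq> {crossing_minus v m..crossing_plus v m}"
  shows "measure (gauss 0 1) B \<le> measure (gauss m v) B"
  using assms log_density_ratio_sign_lt1(2)[OF assms(1,2)] by (intro measure_std_normal_le_gauss) auto

lemma cdf_gauss_crossing_lt1:
  assumes "0 < v" "v < 1"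
  obtains c where "crossing_minus v m \<le> c" "c \<le> crossing_plus v m" "cdf (gauss m v) c = Phi c"
proof -
  let ?x = "crossing_minus v m" and ?y = "crossing_plus v m"
  have "{..?x} \<subseteq> {..?x} \<union> {?y..}" "{?y<..} \<subseteq> {..?x} \<union> {?y..}" by auto
  then have "cdf (gauss m v) ?x - Phi ?x \<le> 0" "0 \<le> cdf (gauss m v) ?y - Phi ?y"
    using measure_gauss_le_std_normal_lt1[OF assms, where B="{..?x}" and m=m]
      measure_gauss_le_std_normal_lt1[OF assms, where B="{?y<..}" and m=m] assms
    by (auto simp: measure_gauss_atMost measure_gauss_greaterThan)
  then show ?thesis
    using IVT'[of "\<lambda>t. cdf (gauss m v) t - Phi t" ?x 0 ?y] crossing_minus_le_plus[OF assms]
      continuous_on_cdf_gauss_minus_Phi[OF assms(1)] that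
    by force
qed

lemma Phi_le_cdf_gauss_lt1:
  assumes v: "0 < v" "v < 1"
    and c: "crossing_minus v m \<le> c" "cdf (gauss m v) c = Phi c" and "c \<le> t"
  shows "Phi t \<le> cdf (gauss m v) t"
proof (cases "t \<le> crossing_plus v m")
  case True
  then have "{c<..t} \<subseteq> {crossing_minus v m..crossing_plus v m}" using c(1) by auto
  then show ?thesis
    using measure_std_normal_le_gauss_lt1[OF v, where B="{c<..t}" and m=m] c(2) \<open>c \<le> t\<close> v
    by (simp add: measure_gauss_greaterThanAtMost)
next
  case False
  then have "{t<..} \<subseteq> {..crossing_minus v m} \<union> {crossing_plus v m..}" by auto
  then show ?thesis
    using measure_gauss_le_std_normal_lt1[OF v, where B="{t<..}" and m=m] v
    by (simp add: measure_gauss_greaterThan)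
qed

lemma S_eq_gap_lt1:
  assumes v: "0 < v" "v < 1"
  shows "S v m = Phi (crossing_minus v m) - cdf (gauss m v) (crossing_minus v m)"
proof -
  obtain c where c: "crossing_minus v m \<le> c" "c \<le> crossing_plus v m" "cdf (gauss m v) c = Phi c"
    by (rule cdf_gauss_crossing_lt1[OF v])
  define A where "A = gauss_splice c 0 1 m v"
  have cdf_A: "cdf A t = (if t \<le> c then Phi t else cdf (gauss m v) t)" for t
    unfolding A_def using cdf_gauss_splice[of 1 v 0 c m t] v c(3) by simp
  have measure_A: "measure A B = measure (gauss 0 1) (B \<inter> {..c}) + measure (gauss m v) (B \<inter> {c<..})"
    if "B \<in> sets borel" for B
    unfolding A_def using measure_gauss_splice[of 1 v B c 0 m] v that by simp
  show ?thesis
  proof (rule S_eq_of_witness)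
    show "real_distribution A"
      unfolding A_def using v c(3) by (intro real_distribution_gauss_splice) auto
    show "Phi t \<le> cdf A t" for t
      using Phi_le_cdf_gauss_lt1[OF v c(1,3), of t] by (cases "t \<le> c") (simp_all add: cdf_A)
    show "cdf A (crossing_minus v m) = Phi (crossing_minus v m)"
      using c(1) by (simp add: cdf_A)
    show "measure (gauss m v) B \<le> measure A B" if "B \<in> sets borel" "B \<subseteq> {..crossing_minus v m}" for B
    proof -
      have "B \<inter> {..c} = B" "B \<inter> {c<..} = {}" "B \<subseteq> {..crossing_minus v m} \<union> {crossing_plus v m..}"
        using that(2) c(1) by auto
      then show ?thesis
        using measure_gauss_le_std_normal_lt1[OF v that(1)] by (simp add: measure_A that(1))
    qed
    show "measure A B \<le> measure (gauss m v) B" if "B \<in> sets borel" "B \<inter> {..crossing_minus v m} = {}" for B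
    proof -
      have "B \<inter> {..c} \<subseteq> {crossing_minus v m..crossing_plus v m}" using that(2) c(2) by force
      then show ?thesis
        using measure_std_normal_le_gauss_lt1[OF v, where B="B \<inter> {..c}" and m=m] that(1)
          measure_gauss_split_at[of v B m c] v
        by (simp add: measure_A)
    qed
  qed (use v in simp)
qed

lemma measure_gauss_le_std_normal_gt1:
  assumes "1 < v" "B \<in> sets borel" "B \<subseteq> {crossing_plus v m..crossing_minus v m}"
  shows "measure (gauss m v) B \<le> measure (gauss 0 1) B"
  using assms log_density_ratio_sign_gt1(1)[OF assms(1)] by (intro measure_gauss_le_std_normal) auto

lemma measure_std_normal_le_gauss_gt1:
  assumes "1 < v" "B \<in> sets borel" "B \<subseteq> {..crossing_plus v m} \<union> {crossing_minus v m..}"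
  shows "measure (gauss 0 1) B \<le> measure (gauss m v) B"
  using assms log_density_ratio_sign_gt1(2)[OF assms(1)] by (intro measure_std_normal_le_gauss) auto

lemma cdf_gauss_crossing_gt1:
  assumes "1 < v"
  obtains c where "crossing_plus v m \<le> c" "c \<le> crossing_minus v m" "cdf (gauss m v) c = Phi c"
proof -
  let ?x = "crossing_minus v m" and ?y = "crossing_plus v m"
  have "{..?y} \<subseteq> {..?y} \<union> {?x..}" "{?x<..} \<subseteq> {..?y} \<union> {?x..}" by auto
  then have "0 \<le> cdf (gauss m v) ?y - Phi ?y" "cdf (gauss m v) ?x - Phi ?x \<le> 0"
    using measure_std_normal_le_gauss_gt1[OF assms, where B="{..?y}" and m=m]
      measure_std_normal_le_gauss_gt1[OF assms, where B="{?x<..}" and m=m] assms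
    by (auto simp: measure_gauss_atMost measure_gauss_greaterThan)
  then show ?thesis
    using IVT2'[of "\<lambda>t. cdf (gauss m v) t - Phi t" ?x 0 ?y] crossing_plus_le_minus[OF assms]
      continuous_on_cdf_gauss_minus_Phi[where v=v and m=m] assms that
    by force
qed

lemma Phi_le_cdf_gauss_gt1:
  assumes v: "1 < v"
    and c: "c \<le> crossing_minus v m" "cdf (gauss m v) c = Phi c" and "t \<le> c"
  shows "Phi t \<le> cdf (gauss m v) t"
proof (cases "t \<le> crossing_plus v m")
  case True
  then have "{..t} \<subseteq> {..crossing_plus v m} \<union> {crossing_minus v m..}" by auto
  then show ?thesis
    using measure_std_normal_le_gauss_gt1[OF v, where B="{..t}" and m=m] v
    by (simp add: measure_gauss_atMost)
next
  case False
  then have "{t<..c} \<subseteq> {crossing_plus v m..crossing_minus v m}" using c(1) by auto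
  then show ?thesis
    using measure_gauss_le_std_normal_gt1[OF v, where B="{t<..c}" and m=m] c(2) \<open>t \<le> c\<close> v
    by (simp add: measure_gauss_greaterThanAtMost)
qed

lemma S_eq_gap_gt1:
  assumes v: "1 < v"
  shows "S v m = Phi (crossing_minus v m) - cdf (gauss m v) (crossing_minus v m)"
proof -
  have v0: "0 < v" using v by simp
  obtain c where c: "crossing_plus v m \<le> c" "c \<le> crossing_minus v m" "cdf (gauss m v) c = Phi c"
    by (rule cdf_gauss_crossing_gt1[OF v])
  define A where "A = gauss_splice c m v 0 1"
  have cdf_A: "cdf A t = (if t \<le> c then cdf (gauss m v) t else Phi t)" for t
    unfolding A_def using cdf_gauss_splice[of v 1 m c 0 t] v0 c(3) by simp
  have measure_A: "measure A B = measure (gauss m v) (B \<inter> {..c}) + measure (gauss 0 1) (B \<inter> {c<..})"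
    if "B \<in> sets borel" for B
    unfolding A_def using measure_gauss_splice[of v 1 B c m 0] v0 that by simp
  show ?thesis
  proof (rule S_eq_of_witness)
    show "real_distribution A"
      unfolding A_def using v0 c(3) by (intro real_distribution_gauss_splice) auto
    show "Phi t \<le> cdf A t" for t
      using Phi_le_cdf_gauss_gt1[OF v c(2,3), of t] by (cases "t \<le> c") (simp_all add: cdf_A)
    show "cdf A (crossing_minus v m) = Phi (crossing_minus v m)"
      using c(2,3) by (simp add: cdf_A)
    show "measure (gauss m v) B \<le> measure A B" if "B \<in> sets borel" "B \<subseteq> {..crossing_minus v m}" for B
    proof -
      have "B \<inter> {c<..} \<subseteq> {crossing_plus v m..crossing_minus v m}" using that(2) c(1) by auto
      then show ?thesis
        using measure_gauss_le_std_normal_gt1[OF v, where B="B \<inter> {c<..}" and m=m] that(1)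
          measure_gauss_split_at[of v B m c] v0
        by (simp add: measure_A)
    qed
    show "measure A B \<le> measure (gauss m v) B" if "B \<in> sets borel" "B \<inter> {..crossing_minus v m} = {}" for B
    proof -
      have "B \<inter> {..c} = {}" "B \<inter> {c<..} = B" "B \<subseteq> {..crossing_plus v m} \<union> {crossing_minus v m..}"
        using that(2) c(2) by auto
      then show ?thesis
        using measure_std_normal_le_gauss_gt1[OF v that(1)] by (simp add: measure_A that(1))
    qed
  qed (use v0 in simp)
qed

lemma crossing_minus_standardized:
  assumes "v > 0" "v \<noteq> 1"
  shows "(crossing_minus v m - m) / sqrt v = (sqrt v * m - sqrt (crossing_disc v m)) / (1 - v)"
proof -
  have "1 - v \<noteq> 0" "sqrt v \<noteq> 0" "sqrt v * sqrt v = v" using assms by auto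
  then show ?thesis
    by (simp add: crossing_minus_def field_simps)
qed

lemma S_eq_gap:
  "v > 0 \<Longrightarrow> v \<noteq> 1 \<Longrightarrow> S v m = Phi (crossing_minus v m) - cdf (gauss m v) (crossing_minus v m)"
  using S_eq_gap_lt1[of v m] S_eq_gap_gt1[of v m] by (cases "v < 1") auto

lemma S_formula:
  assumes "v > 0" "v \<noteq> 1"
  shows "S v m = Phi (crossing_minus v m) - Phi ((sqrt v * m - sqrt (crossing_disc v m)) / (1 - v))"
  using S_eq_gap[OF assms] assms by (simp add: cdf_gauss crossing_minus_standardized)

lemma log_density_ratio_one: "log_density_ratio 1 m t = m * (m - 2 * t) / 2"
  by (simp add: log_density_ratio_def power2_eq_square algebra_simps)

lemma S_one_pos:
  assumes m: "m > 0"
  shows "S 1 m = 2 * Phi (m / 2) - 1"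
proof -
  have "S 1 m = Phi (m / 2) - cdf (gauss m 1) (m / 2)"
  proof (rule S_eq_of_witness[OF _ real_distribution_std_normal])
    show "measure (gauss m 1) B \<le> measure (gauss 0 1) B"
      if "B \<in> sets borel" "B \<subseteq> {..m / 2}" for B
      using that m by (intro measure_gauss_le_std_normal) (auto simp: log_density_ratio_one)
    show "measure (gauss 0 1) B \<le> measure (gauss m 1) B"
      if "B \<in> sets borel" "B \<inter> {..m / 2} = {}" for B
    proof (rule measure_std_normal_le_gauss)
      fix t assume "t \<in> B"
      then have "m - 2 * t \<le> 0" using that(2) by force
      then show "log_density_ratio 1 m t \<le> 0"
        using m by (simp add: log_density_ratio_one mult_nonneg_nonpos)
    qed (use that in simp_all)
  qed simp_all
  then show ?thesis
    using Phi_minus[of "m / 2"] by (simp add: cdf_gauss)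
qed

lemma S_one_nonpos:
  assumes "m \<le> 0"
  shows "S 1 m = 0"
proof -
  have "S 1 m \<le> tv_dist (gauss m 1) (gauss m 1)"
    using assms by (intro S_le_tv_dist real_distribution_gauss) (simp_all add: cdf_gauss)
  also have "\<dots> \<le> 0"
    by (rule tv_dist_le) simp
  finally show ?thesis
    using S_nonneg[of 1 m] by simp
qed

lemma Phi_0: "Phi 0 = 1 / 2"
  using Phi_minus[of 0] by simp

lemma S_one: "S 1 m = max (2 * Phi (m / 2) - 1) 0"
proof (cases "m > 0")
  case True
  then have "Phi 0 < Phi (m / 2)" by simp
  then show ?thesis using S_one_pos[OF True] by (simp add: Phi_0)
next
  case False
  then have "Phi (m / 2) \<le> Phi 0" by simp
  then show ?thesis using S_one_nonpos[of m] False by (simp add: Phi_0)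
qed

lemma S_eq_zero_or_Phi_gap:
  assumes "v > 0"
  shows "S v m = 0 \<or> (\<exists>t. S v m = Phi t - Phi ((t - m) / sqrt v))"
proof (cases "v = 1")
  case v: True
  show ?thesis
  proof (cases "m > 0")
    case True
    have "(m / 2 - m) / sqrt v = - (m / 2)" using v by simp
    then have "S v m = Phi (m / 2) - Phi ((m / 2 - m) / sqrt v)"
      using S_one_pos[OF True] Phi_minus[of "m / 2"] v by simp
    then show ?thesis by blast
  qed (use v S_one_nonpos in simp)
next
  case False
  then show ?thesis
    using S_eq_gap[OF assms False] assms by (auto simp: cdf_gauss)
qed

lemma S_mono:
  assumes "v > 0" "m1 \<le> m2"
  shows "S v m1 \<le> S v m2"
  using S_eq_zero_or_Phi_gap[OF assms(1), of m1]
proof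
  assume "S v m1 = 0"
  then show ?thesis using S_nonneg[of v m2] assms(1) by simp
next
  assume "\<exists>t. S v m1 = Phi t - Phi ((t - m1) / sqrt v)"
  then obtain t where t: "S v m1 = Phi t - Phi ((t - m1) / sqrt v)" ..
  have "Phi ((t - m2) / sqrt v) \<le> Phi ((t - m1) / sqrt v)"
    using assms by (simp add: divide_right_mono)
  then show ?thesis
    using t Phi_gap_le_S[OF assms(1), of t m2] by linarith
qed

text \<open>Under \<open>v \<mapsto> 1/v\<close>, \<open>m \<mapsto> m/\<surd>v\<close> the two arguments of \<open>Phi\<close> in \<open>S_formula\<close> are swapped and negated.\<close>

lemma S_sym:
  assumes v: "v > 0"
  shows "S v m = S (1 / v) (m / sqrt v)"
proof (cases "v = 1")
  case False
  define D where "D = crossing_disc v m"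
  define s where "s = sqrt v"
  have s: "0 < s" "v = s * s" "1 - s * s \<noteq> 0" "s * s - 1 \<noteq> 0"
    using v False by (auto simp: s_def)
  have v': "1 / v > 0" "1 / v \<noteq> 1" using v False by auto
  have "crossing_disc (1 / v) (m / s) = D / (s * s)"
    using s by (simp add: D_def crossing_disc_def ln_div power_divide field_simps power2_eq_square)
  then have sqrt_disc: "sqrt (crossing_disc (1 / v) (m / s)) = sqrt D / s"
    using s(1) by (simp add: real_sqrt_divide real_sqrt_mult)
  have sqrt_inv: "sqrt (1 / v) = 1 / s"
    by (simp add: s_def real_sqrt_divide)
  have "crossing_minus (1 / v) (m / s) = - ((s * m - sqrt D) / (1 - v))"
    unfolding crossing_minus_def sqrt_disc sqrt_inv using s by (simp add: field_simps)
  moreover have "(sqrt (1 / v) * (m / s) - sqrt (crossing_disc (1 / v) (m / s))) / (1 - 1 / v)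
      = - crossing_minus v m"
    unfolding crossing_minus_def sqrt_disc sqrt_inv using s by (simp add: D_def s_def[symmetric] field_simps)
  ultimately show ?thesis
    using S_formula[OF v'] S_formula[OF v False] by (simp add: Phi_minus D_def s_def)
qed simp

lemma isCont_S:
  assumes "v > 0"
  shows "isCont (S v) m"
proof (cases "v = 1")
  case True
  have "S v = (\<lambda>m. max (2 * Phi (m / 2) - 1) 0)"
    using True by (simp add: S_one fun_eq_iff)
  then show ?thesis by (simp add: continuous_intros)
next
  case False
  have "S v = (\<lambda>m. Phi ((m - sqrt v * sqrt (m\<^sup>2 + (v - 1) * ln v)) / (1 - v))
      - Phi ((sqrt v * m - sqrt (m\<^sup>2 + (v - 1) * ln v)) / (1 - v)))"
    using S_formula[OF assms False] by (simp add: fun_eq_iff crossing_minus_def crossing_disc_def)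
  then show ?thesis
    using False by (simp add: continuous_intros)
qed

lemma S_le_Phi_lt1:
  assumes "0 < v" "v < 1"
  shows "S v m \<le> Phi (m / (1 - v))"
proof -
  have "crossing_minus v m \<le> m / (1 - v)"
    unfolding crossing_minus_def using assms crossing_disc_nonneg[of v m]
    by (intro divide_right_mono) auto
  then show ?thesis
    using S_formula[of v m] assms Phi_nonneg[of "(sqrt v * m - sqrt (crossing_disc v m)) / (1 - v)"]
      Phi_mono[of "crossing_minus v m" "m / (1 - v)"]
    by linarith
qed

lemma filterlim_cmult_pos_at_top: "c > 0 \<Longrightarrow> filterlim (\<lambda>x::real. c * x) at_top at_top"
  and filterlim_cmult_neg_at_top: "c < 0 \<Longrightarrow> filterlim (\<lambda>x::real. c * x) at_bot at_top"
  using filterlim_cmult_at_bot_at_top[OF filterlim_ident, of c] by auto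

lemma filterlim_cmult_pos_at_bot: "c > 0 \<Longrightarrow> filterlim (\<lambda>x::real. c * x) at_bot at_bot"
  using filterlim_tendsto_pos_mult_at_bot_iff[OF tendsto_const, where c=c and F=at_bot and g="\<lambda>x. x"]
  by (simp add: filterlim_ident)

lemma S_at_top:
  assumes "v > 0"
  shows "(S v \<longlongrightarrow> 1) at_top"
proof (rule tendsto_sandwich)
  let ?L = "\<lambda>m. Phi ((1 / 2) * m) - Phi ((- 1 / (2 * sqrt v)) * m)"
  show "\<forall>\<^sub>F m in at_top. ?L m \<le> S v m"
  proof (intro always_eventually allI)
    fix m :: real
    have "(m / 2 - m) / sqrt v = (- 1 / (2 * sqrt v)) * m" by (simp add: field_simps)
    then show "?L m \<le> S v m" using Phi_gap_le_S[OF assms, of "m / 2" m] by simp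
  qed
  show "\<forall>\<^sub>F m in at_top. S v m \<le> 1" using S_le_1[of v] assms by simp
  have "- 1 / (2 * sqrt v) < 0" using assms by (simp add: divide_neg_pos)
  then have "(?L \<longlongrightarrow> 1 - 0) at_top"
    by (intro tendsto_diff filterlim_compose[OF Phi_at_top] filterlim_compose[OF Phi_at_bot]
        filterlim_cmult_pos_at_top filterlim_cmult_neg_at_top) simp_all
  then show "(?L \<longlongrightarrow> 1) at_top" by simp
qed simp

lemma S_at_bot_lt1:
  assumes "0 < v" "v < 1"
  shows "(S v \<longlongrightarrow> 0) at_bot"
proof (rule tendsto_sandwich)
  show "\<forall>\<^sub>F m in at_bot. 0 \<le> S v m" using S_nonneg[of v] assms by simp
  show "\<forall>\<^sub>F m in at_bot. S v m \<le> Phi ((1 / (1 - v)) * m)"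
    using S_le_Phi_lt1[OF assms] by simp
  have "1 / (1 - v) > 0" using assms by simp
  then show "((\<lambda>m. Phi ((1 / (1 - v)) * m)) \<longlongrightarrow> 0) at_bot"
    by (intro filterlim_compose[OF Phi_at_bot] filterlim_cmult_pos_at_bot)
qed simp

lemma S_at_bot:
  assumes v: "v > 0"
  shows "(S v \<longlongrightarrow> 0) at_bot"
proof -
  consider "v < 1" | "v = 1" | "v > 1" by linarith
  then show ?thesis
  proof cases
    case 2
    have "\<forall>\<^sub>F m in at_bot. S v m = 0"
      using eventually_le_at_bot[of 0] by eventually_elim (simp add: 2 S_one_nonpos)
    then show ?thesis by (rule tendsto_eventually)
  next
    case 3
    have "S v = (\<lambda>m. S (1 / v) ((1 / sqrt v) * m))"
      using S_sym[OF v] by (simp add: fun_eq_iff)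
    moreover have "((\<lambda>m. S (1 / v) ((1 / sqrt v) * m)) \<longlongrightarrow> 0) at_bot"
      using v 3
      by (intro filterlim_compose[OF S_at_bot_lt1] filterlim_cmult_pos_at_bot) auto
    ultimately show ?thesis by simp
  qed (use S_at_bot_lt1 v in auto)
qed

text \<open>For \<open>v = 0\<close> the optimal \<open>A\<close> is \<open>N(0,1)\<close> with all mass above \<open>m\<close> moved to the atom \<open>m\<close>.\<close>

lemma measure_std_normal_min:
  "B \<in> sets borel \<Longrightarrow>
    measure (distr (gauss 0 1) borel (\<lambda>x. min x m)) B = measure (gauss 0 1) ((\<lambda>x. min x m) -` B)"
  by (subst measure_distr) auto

lemma vimage_min_borel: "B \<in> sets borel \<Longrightarrow> (\<lambda>x::real. min x m) -` B \<in> sets borel"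
  using measurable_sets[of "\<lambda>x::real. min x m" borel borel B] by simp

lemma Phi_le_cdf_std_normal_min: "Phi t \<le> cdf (distr (gauss 0 1) borel (\<lambda>x. min x m)) t"
proof -
  interpret N: real_distribution "gauss 0 1" by (rule real_distribution_std_normal)
  have "Phi t = measure (gauss 0 1) {..t}"
    by (simp add: Phi_def cdf_def)
  also have "\<dots> \<le> measure (gauss 0 1) ((\<lambda>x. min x m) -` {..t})"
    by (rule N.finite_measure_mono) (auto intro: vimage_min_borel)
  also have "\<dots> = cdf (distr (gauss 0 1) borel (\<lambda>x. min x m)) t"
    by (simp add: cdf_def measure_std_normal_min)
  finally show ?thesis .
qed

lemma tv_dist_std_normal_min_le: "tv_dist (distr (gauss 0 1) borel (\<lambda>x. min x m)) (gauss m 0) \<le> Phi m"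
proof (rule tv_dist_le)
  interpret N: real_distribution "gauss 0 1" by (rule real_distribution_std_normal)
  fix B :: "real set" assume B: "B \<in> sets borel"
  let ?A = "distr (gauss 0 1) borel (\<lambda>x. min x m)"
  have gauss_0: "measure (gauss m 0) B = indicator B m"
    using B by (simp add: gauss_def measure_return)
  show "\<bar>measure ?A B - measure (gauss m 0) B\<bar> \<le> Phi m"
  proof (cases "m \<in> B")
    case True
    have "{m..} \<subseteq> (\<lambda>x. min x m) -` B" using True by auto
    then have "measure (gauss 0 1) {m..} \<le> measure ?A B"
      using B vimage_min_borel[OF B] by (simp add: measure_std_normal_min N.finite_measure_mono)
    moreover have "measure (gauss 0 1) {m..} = 1 - Phi m"
      using N.prob_compl[of "{..<m}"] measure_gauss_lessThan[of 1 0 m]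
      by (simp add: Compl_eq_Diff_UNIV[symmetric] Compl_lessThan)
    moreover have "measure ?A B \<le> 1"
      by (simp add: N.prob_space_distr prob_space.prob_le_1)
    ultimately show ?thesis
      using True by (simp add: gauss_0 abs_le_iff)
  next
    case False
    then have "(\<lambda>x. min x m) -` B \<subseteq> {..<m}"
      by (auto simp: min_def less_le split: if_splits)
    then have "measure ?A B \<le> measure (gauss 0 1) {..<m}"
      using B by (simp add: measure_std_normal_min N.finite_measure_mono)
    then show ?thesis
      using False measure_gauss_lessThan[of 1 0 m] by (simp add: gauss_0)
  qed
qed

lemma Phi_le_S_zero: "Phi m \<le> S 0 m"
proof (rule le_S)
  fix A assume A: "real_distribution A" "\<forall>x. Phi x \<le> cdf A x"
  interpret A: real_distribution A by (rule A(1))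
  have "(Phi \<longlongrightarrow> Phi m) (at_left m)"
    using isCont_Phi[of m] unfolding isCont_def by (rule tendsto_within_subset) simp
  then have "Phi m \<le> measure A {..<m}"
    by (intro tendsto_le[OF _ A.cdf_at_left]) (use A(2) in auto)
  moreover have "\<bar>measure A {..<m} - measure (gauss m 0) {..<m}\<bar> \<le> tv_dist A (gauss m 0)"
    by (rule tv_dist_ge[OF A(1) real_distribution_gauss]) auto
  ultimately show "Phi m \<le> tv_dist A (gauss m 0)"
    by (simp add: gauss_def measure_return)
qed

lemma S_zero: "S 0 m = Phi m"
proof (rule antisym)
  have "real_distribution (distr (gauss 0 1) borel (\<lambda>x. min x m))"
    using real_distribution_std_normal
    by (intro prob_space.real_distribution_distr) (simp_all add: real_distribution_def)
  then show "S 0 m \<le> Phi m"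
    using S_le_tv_dist[OF _ _ Phi_le_cdf_std_normal_min] tv_dist_std_normal_min_le
    by (meson order.refl order.trans)
qed (rule Phi_le_S_zero)

lemma S_limit_at_top: "((\<lambda>v. S v (sqrt v * m)) \<longlongrightarrow> Phi m) at_top"
proof (rule tendsto_sandwich)
  let ?L = "\<lambda>v. Phi (m - inverse (sqrt (sqrt v))) - Phi (- sqrt (sqrt v))"
  let ?U = "\<lambda>v::real. Phi (m / (1 - inverse v))"
  have sym: "\<forall>\<^sub>F v in at_top. S v (sqrt v * m) = S (1 / v) m"
  proof (rule eventually_mono[OF eventually_gt_at_top[of 0]])
    fix v :: real assume "v > 0"
    then show "S v (sqrt v * m) = S (1 / v) m"
      using S_sym[of v "sqrt v * m"] by simp
  qed
  show "\<forall>\<^sub>F v in at_top. ?L v \<le> S v (sqrt v * m)"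
    using sym eventually_gt_at_top[of 0]
  proof eventually_elim
    case (elim v)
    define q where "q = sqrt (sqrt v)"
    have q: "q > 0" and sqrt_inv: "sqrt (1 / v) = 1 / (q * q)"
      using elim(2) by (simp_all add: q_def real_sqrt_divide)
    have "(m - inverse q - m) / sqrt (1 / v) = - q"
      unfolding sqrt_inv using q by (simp add: field_simps)
    then show ?case
      using Phi_gap_le_S[of "1 / v" "m - inverse q" m] elim by (simp add: q_def)
  qed
  show "\<forall>\<^sub>F v in at_top. S v (sqrt v * m) \<le> ?U v"
    using sym eventually_gt_at_top[of 1]
  proof eventually_elim
    case (elim v)
    then show ?case using S_le_Phi_lt1[of "1 / v" m] by (simp add: inverse_eq_divide)
  qed
  have q: "filterlim (\<lambda>v::real. sqrt (sqrt v)) at_top at_top"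
    by (rule filterlim_compose[OF sqrt_at_top sqrt_at_top])
  have "((\<lambda>v. Phi (m - inverse (sqrt (sqrt v)))) \<longlongrightarrow> Phi (m - 0)) at_top"
    by (intro isCont_tendsto_compose[OF isCont_Phi] tendsto_diff tendsto_const tendsto_inverse_0_at_top q)
  moreover have "((\<lambda>v. Phi (- sqrt (sqrt v))) \<longlongrightarrow> 0) at_top"
    by (rule filterlim_compose[OF Phi_at_bot]) (use q in \<open>simp add: filterlim_uminus_at_top[symmetric]\<close>)
  ultimately show "(?L \<longlongrightarrow> Phi m) at_top"
    using tendsto_diff[of _ "Phi (m - 0)" at_top _ 0] by simp
  have "(?U \<longlongrightarrow> Phi (m / (1 - 0))) at_top"
    by (intro isCont_tendsto_compose[OF isCont_Phi] tendsto_divide tendsto_diff tendsto_const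
        tendsto_inverse_0_at_top filterlim_ident) simp
  then show "(?U \<longlongrightarrow> Phi m) at_top" by simp
qed

section \<open>The generalized inverse of \<open>S\<^sub>v\<close>\<close>

definition inv_gap :: "real \<Rightarrow> real \<Rightarrow> real \<Rightarrow> real" where
  "inv_gap v eps x = sqrt v * Phi_inv x - Phi_inv (x - eps)"

text \<open>Substituting \<open>x = \<Phi>((m - t) / \<surd>v)\<close> turns the gap \<open>\<Phi>(t) - \<Phi>((t - m) / \<surd>v) \<ge> eps\<close>
  into \<open>inv_gap v eps x \<le> m\<close>.\<close>

lemma le_S_iff_inv_gap:
  assumes v: "v > 0" and eps: "eps > 0"
  shows "eps \<le> S v m \<longleftrightarrow> (\<exists>x\<in>{eps<..<1}. inv_gap v eps x \<le> m)"
proof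
  assume "eps \<le> S v m"
  then obtain t where t: "eps \<le> Phi t - Phi ((t - m) / sqrt v)"
    using S_eq_zero_or_Phi_gap[OF v, of m] eps by auto
  define s where "s = (t - m) / sqrt v"
  define x where "x = Phi (- s)"
  have bounds: "0 < x - eps" "x - eps < 1" "Phi (- t) \<le> x - eps"
    using t Phi_pos[of "- t"] Phi_less_1[of "- s"] eps
    by (auto simp: x_def s_def Phi_minus)
  then have "- t \<le> Phi_inv (x - eps)"
    by (simp add: le_Phi_inv_iff)
  moreover have "sqrt v * s = t - m"
    using v by (simp add: s_def)
  ultimately have "inv_gap v eps x \<le> m"
    by (simp add: inv_gap_def x_def)
  moreover have "x \<in> {eps<..<1}"
    using bounds Phi_less_1[of "- s"] by (simp add: x_def)
  ultimately show "\<exists>x\<in>{eps<..<1}. inv_gap v eps x \<le> m" ..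
next
  assume "\<exists>x\<in>{eps<..<1}. inv_gap v eps x \<le> m"
  then obtain x where x: "eps < x" "x < 1" and gap: "inv_gap v eps x \<le> m" by auto
  define t where "t = - Phi_inv (x - eps)"
  have Phi_t: "Phi t = 1 - (x - eps)"
    using x eps by (simp add: t_def Phi_minus Phi_Phi_inv)
  have "t - m \<le> sqrt v * (- Phi_inv x)"
    using gap by (simp add: inv_gap_def t_def)
  then have "(t - m) / sqrt v \<le> - Phi_inv x"
    using v by (simp add: pos_divide_le_eq mult.commute)
  then have "Phi ((t - m) / sqrt v) \<le> 1 - x"
    using Phi_mono Phi_minus[of "Phi_inv x"] Phi_Phi_inv[of x] x eps by fastforce
  then show "eps \<le> S v m"
    using Phi_gap_le_S[OF v, of t m] Phi_t by linarith
qed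

lemma S_inv_eq_min_inv_gap:
  assumes v: "v > 0" and eps: "0 < eps" "eps < 1"
  obtains x0 where "x0 \<in> {eps<..<1}" "S_inv v eps = inv_gap v eps x0"
    "\<And>x. x \<in> {eps<..<1} \<Longrightarrow> inv_gap v eps x0 \<le> inv_gap v eps x"
proof -
  define T where "T = {m. eps \<le> S v m}"
  have "closed T"
    unfolding T_def using isCont_S[OF v]
    by (intro closed_Collect_le continuous_on_const continuous_at_imp_continuous_on) auto
  moreover obtain m where "eps < S v m"
    using order_tendstoD(1)[OF S_at_top[OF v] eps(2)] by (auto simp: eventually_at_top_linorder)
  then have "T \<noteq> {}" unfolding T_def by (blast intro: less_imp_le)
  moreover obtain b where b: "\<And>m. m \<le> b \<Longrightarrow> S v m < eps"
    using order_tendstoD(2)[OF S_at_bot[OF v] eps(1)] by (auto simp: eventually_at_bot_linorder)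
  then have bdd: "bdd_below T"
  proof (intro bdd_belowI[of _ b])
    fix x assume "x \<in> T"
    then show "b \<le> x" using b[of x] by (cases "x \<le> b") (auto simp: T_def)
  qed
  ultimately have "Inf T \<in> T"
    by (rule closed_contains_Inf[rotated 2])
  then obtain x0 where x0: "x0 \<in> {eps<..<1}" "inv_gap v eps x0 \<le> Inf T"
    using le_S_iff_inv_gap[OF v eps(1)] by (auto simp: T_def)
  have min: "Inf T \<le> inv_gap v eps x" if "x \<in> {eps<..<1}" for x
    using le_S_iff_inv_gap[OF v eps(1)] that by (intro cInf_lower[OF _ bdd]) (auto simp: T_def)
  have "S_inv v eps = Inf T"
    by (simp add: S_inv_def T_def)
  then show ?thesis
    using that x0 min[OF x0(1)] min by force
qed

lemma inv_gap_reflect: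
  assumes "v > 0" "0 < eps" "eps < x" "x < 1"
  shows "sqrt v * inv_gap (1 / v) eps x = inv_gap v eps (1 + eps - x)"
proof -
  have "Phi_inv (1 - x) = - Phi_inv x" "Phi_inv (1 - (x - eps)) = - Phi_inv (x - eps)"
    using assms by (simp_all add: Phi_inv_one_minus)
  moreover have "sqrt v * sqrt (1 / v) = 1"
    using assms(1) by (simp add: real_sqrt_divide)
  ultimately show ?thesis
    by (simp add: inv_gap_def algebra_simps)
qed

lemma S_inv_scale:
  assumes v: "v > 0" and eps: "0 < eps" "eps < 1"
  shows "S_inv v eps = sqrt v * S_inv (1 / v) eps"
proof -
  obtain x0 where x0: "x0 \<in> {eps<..<1}" "S_inv v eps = inv_gap v eps x0"
    and min0: "\<And>x. x \<in> {eps<..<1} \<Longrightarrow> inv_gap v eps x0 \<le> inv_gap v eps x"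
    using S_inv_eq_min_inv_gap[OF v eps] by blast
  have v': "1 / v > 0" using v by simp
  obtain x1 where x1: "x1 \<in> {eps<..<1}" "S_inv (1 / v) eps = inv_gap (1 / v) eps x1"
    and min1: "\<And>x. x \<in> {eps<..<1} \<Longrightarrow> inv_gap (1 / v) eps x1 \<le> inv_gap (1 / v) eps x"
    using S_inv_eq_min_inv_gap[OF v' eps] by blast
  have reflect: "1 + eps - x \<in> {eps<..<1}" if "x \<in> {eps<..<1}" for x
    using that by auto
  have "S_inv v eps \<le> inv_gap v eps (1 + eps - x1)"
    using x0(2) min0[OF reflect[OF x1(1)]] by simp
  also have "\<dots> = sqrt v * S_inv (1 / v) eps"
    using x1 inv_gap_reflect[OF v eps(1), of x1] by simp
  finally have "S_inv v eps \<le> sqrt v * S_inv (1 / v) eps" .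
  moreover have "sqrt v * S_inv (1 / v) eps \<le> sqrt v * inv_gap (1 / v) eps (1 + eps - x0)"
    using x1(2) min1[OF reflect[OF x0(1)]] v by (simp add: mult_left_mono)
  moreover have "sqrt v * inv_gap (1 / v) eps (1 + eps - x0) = S_inv v eps"
    using x0 inv_gap_reflect[OF v eps(1), of "1 + eps - x0"] by simp
  ultimately show ?thesis by linarith
qed

lemma S_is_cdf:
  assumes "v \<ge> 0"
  shows "\<exists>M. real_distribution M \<and> cdf M = S v"
proof (cases "v = 0")
  case True
  then show ?thesis
    using real_distribution_std_normal by (auto simp: fun_eq_iff S_zero)
next
  case False
  with assms have v: "v > 0" by simp
  have "continuous (at_right a) (S v)" for a
    using isCont_S[OF v] by (simp add: continuous_at_imp_continuous_at_within)
  then show ?thesis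
    using real_distribution_interval_measure[OF S_mono[OF v] _ S_at_bot[OF v] S_at_top[OF v]]
      cdf_interval_measure[OF S_mono[OF v] _ S_at_bot[OF v]] by blast
qed

theorem lemma1:
  shows "(\<forall>nu::real. nu \<ge> 0 \<longrightarrow> (\<exists>M. real_distribution M \<and> cdf M = S nu))
   \<and> (\<forall>nu mu::real. nu > 0 \<and> nu \<noteq> 1 \<longrightarrow>
        S nu mu = Phi ((mu - sqrt nu * sqrt (mu\<^sup>2 + (nu - 1) * ln nu)) / (1 - nu))
                - Phi ((sqrt nu * mu - sqrt (mu\<^sup>2 + (nu - 1) * ln nu)) / (1 - nu)))
   \<and> (\<forall>nu eps::real. 0 < nu \<and> 0 < eps \<and> eps < 1 \<longrightarrow>
        (\<exists>x0\<in>{eps<..<1}.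
           S_inv nu eps = sqrt nu * Phi_inv x0 - Phi_inv (x0 - eps) \<and>
           (\<forall>x\<in>{eps<..<1}. sqrt nu * Phi_inv x0 - Phi_inv (x0 - eps)
                              \<le> sqrt nu * Phi_inv x - Phi_inv (x - eps))))
   \<and> (\<forall>mu::real. S 0 mu = Phi mu \<and> ((\<lambda>nu. S nu (sqrt nu * mu)) \<longlongrightarrow> Phi mu) at_top)
   \<and> (\<forall>mu::real. S 1 mu = max (2 * Phi (mu / 2) - 1) 0)
   \<and> (\<forall>nu mu::real. nu > 0 \<longrightarrow> S nu mu = S (1 / nu) (mu / sqrt nu))
   \<and> (\<forall>nu eps::real. nu > 0 \<and> 0 < eps \<and> eps < 1 \<longrightarrow> S_inv nu eps = sqrt nu * S_inv (1 / nu) eps)"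
proof (intro conjI allI impI)
  fix nu mu eps :: real
  show "nu \<ge> 0 \<Longrightarrow> \<exists>M. real_distribution M \<and> cdf M = S nu"
    by (rule S_is_cdf)
  show "nu > 0 \<and> nu \<noteq> 1 \<Longrightarrow>
      S nu mu = Phi ((mu - sqrt nu * sqrt (mu\<^sup>2 + (nu - 1) * ln nu)) / (1 - nu))
        - Phi ((sqrt nu * mu - sqrt (mu\<^sup>2 + (nu - 1) * ln nu)) / (1 - nu))"
    using S_formula[of nu mu] by (simp add: crossing_minus_def crossing_disc_def)
  show "0 < nu \<and> 0 < eps \<and> eps < 1 \<Longrightarrow> \<exists>x0\<in>{eps<..<1}.
      S_inv nu eps = sqrt nu * Phi_inv x0 - Phi_inv (x0 - eps) \<and>
      (\<forall>x\<in>{eps<..<1}. sqrt nu * Phi_inv x0 - Phi_inv (x0 - eps)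
                         \<le> sqrt nu * Phi_inv x - Phi_inv (x - eps))"
    using S_inv_eq_min_inv_gap[of nu eps] unfolding inv_gap_def by metis
  show "S 0 mu = Phi mu" by (rule S_zero)
  show "((\<lambda>nu. S nu (sqrt nu * mu)) \<longlongrightarrow> Phi mu) at_top" by (rule S_limit_at_top)
  show "S 1 mu = max (2 * Phi (mu / 2) - 1) 0" by (rule S_one)
  show "nu > 0 \<Longrightarrow> S nu mu = S (1 / nu) (mu / sqrt nu)" by (rule S_sym)
  show "nu > 0 \<and> 0 < eps \<and> eps < 1 \<Longrightarrow> S_inv nu eps = sqrt nu * S_inv (1 / nu) eps"
    using S_inv_scale by blast
qed

end
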